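(* There is a universal constant $K_0\le 4$ such that for any two independent real random variables $X,Y$ with finite second moments, \[ \operatorname{Var}|X+Y| \;\ge\; \frac{\max\{\operatorname{Var}|X+\mathbb{E}Y|,\ \operatorname{Var}|Y+\mathbb{E}X|\}}{K_0}. \]
   Context: $\operatorname{Var} Z=\mathbb{E}[Z^2]-(\mathbb{E}Z)^2$. *)

theory Defs
  imports "HOL-Probability.Probability"
begin

end

theory Submission
  imports Defs
begin

(* Let a = E Y and let Y' be an independent copy of Y. The key estimate is that for all reals t, w
     (|t + a| - |w + a|)^2 <= 4 E (|t + Y| - |w + Y'|)^2
                           = 4 (E (t + Y)^2 + E (w + Y)^2 - 2 E |t + Y| E |w + Y|);
   substituting two independent copies of X and averaging turns it into
   2 Var |X + a| <= 8 Var |X + Y|.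
   For the estimate with w <= t, put d = (t - w)/2, c = (t + w)/2, let K be c + Y clamped to
   [-d, d] and R = c + Y - K. Then |t + Y| = d + K + |R| and |w + Y| = d - K + |R|, and R vanishes
   off {|K| = d}. The left-hand side is at most 4 d^2 and at most 4 (E K + E R)^2, while the
   right-hand side is 8 (Var |R| + E K^2 + (E K)^2). Pointwise AM-GM on {|K| = d} shows that
   either E K^2 >= d^2 / 2 or 2 (E |R|)^2 <= E R^2, and in either case the estimate follows. *)

lemma abs_add_minus_abs_diff_sq_le:
  fixes d e :: real
  assumes "0 \<le> d"
  shows "(\<bar>e + d\<bar> - \<bar>e - d\<bar>)\<^sup>2 \<le> 4 * d\<^sup>2" and "(\<bar>e + d\<bar> - \<bar>e - d\<bar>)\<^sup>2 \<le> 4 * e\<^sup>2"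
proof -
  have "\<bar>\<bar>e + d\<bar> - \<bar>e - d\<bar>\<bar> \<le> \<bar>2 * d\<bar>" and "\<bar>\<bar>e + d\<bar> - \<bar>e - d\<bar>\<bar> \<le> \<bar>2 * e\<bar>"
    using assms by (auto simp: abs_if)
  then show "(\<bar>e + d\<bar> - \<bar>e - d\<bar>)\<^sup>2 \<le> 4 * d\<^sup>2" and "(\<bar>e + d\<bar> - \<bar>e - d\<bar>)\<^sup>2 \<le> 4 * e\<^sup>2"
    by (simp_all only: abs_le_square_iff power_mult_distrib) simp_all
qed

lemma abs_add_eq_clamp:
  fixes d s :: real
  assumes "0 \<le> d"
  shows "\<bar>s + d\<bar> = d + max (-d) (min d s) + \<bar>s - max (-d) (min d s)\<bar>"
    and "\<bar>s - d\<bar> = d - max (-d) (min d s) + \<bar>s - max (-d) (min d s)\<bar>"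
  using assms by (auto simp: max_def min_def abs_if)

lemma dichotomy_of_am_gm_bound:
  fixes \<alpha> \<rho> \<kappa> d :: real
  assumes "0 < \<alpha>" "d \<noteq> 0" and am_gm: "\<alpha> \<le> \<rho> / (4 * \<alpha>) + \<alpha> * (\<kappa> / d\<^sup>2)"
  shows "d\<^sup>2 \<le> 2 * \<kappa> \<or> 2 * \<alpha>\<^sup>2 \<le> \<rho>"
proof (rule disjCI)
  assume "\<not> 2 * \<alpha>\<^sup>2 \<le> \<rho>"
  then have "\<rho> / (4 * \<alpha>) < \<alpha> / 2"
    using \<open>0 < \<alpha>\<close> by (simp add: field_simps power2_eq_square)
  with am_gm have "\<alpha> * (1 / 2) < \<alpha> * (\<kappa> / d\<^sup>2)" by linarith
  then have "1 / 2 < \<kappa> / d\<^sup>2"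
    using \<open>0 < \<alpha>\<close> mult_less_cancel_left_pos by blast
  then show "d\<^sup>2 \<le> 2 * \<kappa>"
    using \<open>d \<noteq> 0\<close> by (simp add: field_simps)
qed

context prob_space begin

lemma indep_var_sym:
  assumes "indep_var S X T Y"
  shows "indep_var T Y S X"
proof -
  have swap: "\<forall>b\<in>B. \<forall>a\<in>A. prob (b \<inter> a) = prob b * prob a"
    if "\<forall>a\<in>A. \<forall>b\<in>B. prob (a \<inter> b) = prob a * prob b" for A B
  proof (intro ballI)
    fix b a assume "b \<in> B" "a \<in> A"
    with that have "prob (a \<inter> b) = prob a * prob b" by blast
    then show "prob (b \<inter> a) = prob b * prob a" by (simp add: Int_commute mult.commute)
  qed
  from assms show ?thesis
    unfolding indep_var_eq indep_sets2_eq using swap by auto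
qed

lemma indep_var_expectation_iterated:
  fixes f :: "'b \<Rightarrow> 'b \<Rightarrow> real"
  assumes indep: "indep_var S X T Y"
    and f[measurable]: "(\<lambda>(x, y). f x y) \<in> borel_measurable (S \<Otimes>\<^sub>M T)"
    and int: "integrable M (\<lambda>\<omega>. f (X \<omega>) (Y \<omega>))"
  shows "integrable M (\<lambda>\<omega>. expectation (\<lambda>\<omega>'. f (X \<omega>) (Y \<omega>')))"
    and "expectation (\<lambda>\<omega>. f (X \<omega>) (Y \<omega>)) = expectation (\<lambda>\<omega>. expectation (\<lambda>\<omega>'. f (X \<omega>) (Y \<omega>')))"
proof -
  have Xm[measurable]: "X \<in> measurable M S" and [measurable]: "Y \<in> measurable M T"
    using indep by (auto dest: indep_var_rv1 indep_var_rv2)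
  interpret PX: prob_space "distr M S X" by (rule prob_space_distr) simp
  interpret PY: prob_space "distr M T Y" by (rule prob_space_distr) simp
  interpret P: pair_prob_space "distr M S X" "distr M T Y" ..
  have joint: "distr M S X \<Otimes>\<^sub>M distr M T Y = distr M (S \<Otimes>\<^sub>M T) (\<lambda>\<omega>. (X \<omega>, Y \<omega>))"
    using indep unfolding indep_var_distribution_eq by simp
  have section_integral:
    "(\<integral>y. f (X \<omega>) y \<partial>distr M T Y) = expectation (\<lambda>\<omega>'. f (X \<omega>) (Y \<omega>'))"
    if "\<omega> \<in> space M" for \<omega>
    using measurable_space[OF Xm that] by (simp add: integral_distr)
  have fI: "integrable (distr M S X \<Otimes>\<^sub>M distr M T Y) (\<lambda>(x, y). f x y)"
    unfolding joint using int by (subst integrable_distr_eq) auto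
  have "integrable (distr M S X) (\<lambda>x. \<integral>y. f x y \<partial>distr M T Y)"
    using P.integrable_fst'[OF fI] by simp
  then show "integrable M (\<lambda>\<omega>. expectation (\<lambda>\<omega>'. f (X \<omega>) (Y \<omega>')))"
  proof (subst (asm) integrable_distr_eq)
    assume "integrable M (\<lambda>\<omega>. \<integral>y. f (X \<omega>) y \<partial>distr M T Y)"
    then show ?thesis
      by (rule Bochner_Integration.integrable_cong[THEN iffD1, OF refl, rotated])
        (rule section_integral)
  qed auto
  have "expectation (\<lambda>\<omega>. f (X \<omega>) (Y \<omega>)) = integral\<^sup>L (distr M S X \<Otimes>\<^sub>M distr M T Y) (\<lambda>(x, y). f x y)"
    unfolding joint by (subst integral_distr) auto
  also have "\<dots> = (\<integral>x. (\<integral>y. f x y \<partial>distr M T Y) \<partial>distr M S X)"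
    using P.integral_fst'[OF fI] by simp
  also have "\<dots> = expectation (\<lambda>\<omega>. expectation (\<lambda>\<omega>'. f (X \<omega>) (Y \<omega>')))"
    by (subst integral_distr) (auto simp: section_integral intro: Bochner_Integration.integral_cong)
  finally show "expectation (\<lambda>\<omega>. f (X \<omega>) (Y \<omega>)) = expectation (\<lambda>\<omega>. expectation (\<lambda>\<omega>'. f (X \<omega>) (Y \<omega>')))" .
qed

lemma moment_dichotomy:
  fixes K R :: "'a \<Rightarrow> real"
  assumes [measurable]: "K \<in> borel_measurable M" "R \<in> borel_measurable M"
    and K2: "integrable M (\<lambda>\<omega>. (K \<omega>)\<^sup>2)" and R2: "integrable M (\<lambda>\<omega>. (R \<omega>)\<^sup>2)"
    and level: "\<And>\<omega>. R \<omega> \<noteq> 0 \<Longrightarrow> \<bar>K \<omega>\<bar> = d"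
  shows "d\<^sup>2 \<le> 2 * expectation (\<lambda>\<omega>. (K \<omega>)\<^sup>2) \<or>
    2 * (expectation (\<lambda>\<omega>. \<bar>R \<omega>\<bar>))\<^sup>2 \<le> expectation (\<lambda>\<omega>. (R \<omega>)\<^sup>2)"
proof -
  define \<alpha> where "\<alpha> = expectation (\<lambda>\<omega>. \<bar>R \<omega>\<bar>)"
  define \<rho> where "\<rho> = expectation (\<lambda>\<omega>. (R \<omega>)\<^sup>2)"
  define \<kappa> where "\<kappa> = expectation (\<lambda>\<omega>. (K \<omega>)\<^sup>2)"
  have "0 \<le> \<alpha>" "0 \<le> \<rho>" "0 \<le> \<kappa>"
    unfolding \<alpha>_def \<rho>_def \<kappa>_def by simp_all
  consider "d = 0 \<or> \<alpha> = 0" | "d \<noteq> 0" "0 < \<alpha>"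
    using \<open>0 \<le> \<alpha>\<close> by linarith
  then show ?thesis
  proof cases
    case 1
    then show ?thesis using \<open>0 \<le> \<rho>\<close> \<open>0 \<le> \<kappa>\<close> by (auto simp: \<alpha>_def \<rho>_def \<kappa>_def)
  next
    case 2
    \<comment> \<open>AM-GM on \<open>{R \<noteq> 0}\<close>, where \<open>K\<^sup>2 / d\<^sup>2 = 1\<close>\<close>
    have pointwise: "\<bar>R \<omega>\<bar> \<le> (R \<omega>)\<^sup>2 / (4 * \<alpha>) + \<alpha> * ((K \<omega>)\<^sup>2 / d\<^sup>2)" for \<omega>
    proof (cases "R \<omega> = 0")
      case False
      then have unit: "(K \<omega>)\<^sup>2 / d\<^sup>2 = 1"
        using level \<open>d \<noteq> 0\<close> by (metis divide_self power2_abs power_not_zero)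
      have "0 \<le> (\<bar>R \<omega>\<bar> - 2 * \<alpha>)\<^sup>2" by simp
      then have "\<bar>R \<omega>\<bar> \<le> (R \<omega>)\<^sup>2 / (4 * \<alpha>) + \<alpha>"
        using \<open>0 < \<alpha>\<close> by (simp add: field_simps power2_eq_square)
      then show ?thesis unfolding unit by simp
    qed (use \<open>0 < \<alpha>\<close> in simp)
    have "integrable M (\<lambda>\<omega>. \<bar>R \<omega>\<bar>)"
      using square_integrable_imp_integrable[OF _ R2] by simp
    moreover have "integrable M (\<lambda>\<omega>. (R \<omega>)\<^sup>2 / (4 * \<alpha>) + \<alpha> * ((K \<omega>)\<^sup>2 / d\<^sup>2))"
      using R2 K2 by simp
    ultimately have "expectation (\<lambda>\<omega>. \<bar>R \<omega>\<bar>)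
        \<le> expectation (\<lambda>\<omega>. (R \<omega>)\<^sup>2 / (4 * \<alpha>) + \<alpha> * ((K \<omega>)\<^sup>2 / d\<^sup>2))"
      by (rule integral_mono) (rule pointwise)
    also have "\<dots> = \<rho> / (4 * \<alpha>) + \<alpha> * (\<kappa> / d\<^sup>2)"
      using R2 K2 unfolding \<rho>_def \<kappa>_def by simp
    finally have "\<alpha> \<le> \<rho> / (4 * \<alpha>) + \<alpha> * (\<kappa> / d\<^sup>2)"
      unfolding \<alpha>_def[symmetric] .
    with \<open>0 < \<alpha>\<close> \<open>d \<noteq> 0\<close> have "d\<^sup>2 \<le> 2 * \<kappa> \<or> 2 * \<alpha>\<^sup>2 \<le> \<rho>"
      by (rule dichotomy_of_am_gm_bound)
    then show ?thesis unfolding \<alpha>_def \<rho>_def \<kappa>_def .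
  qed
qed

lemma clamped_split_spread_eq:
  fixes K R :: "'a \<Rightarrow> real"
  assumes "0 \<le> d" and [measurable]: "K \<in> borel_measurable M" "R \<in> borel_measurable M"
    and K_le: "\<And>\<omega>. \<bar>K \<omega>\<bar> \<le> d" and R2: "integrable M (\<lambda>\<omega>. (R \<omega>)\<^sup>2)"
  shows "expectation (\<lambda>\<omega>. (d + K \<omega> + \<bar>R \<omega>\<bar>)\<^sup>2) + expectation (\<lambda>\<omega>. (d - K \<omega> + \<bar>R \<omega>\<bar>)\<^sup>2)
      - 2 * expectation (\<lambda>\<omega>. d + K \<omega> + \<bar>R \<omega>\<bar>) * expectation (\<lambda>\<omega>. d - K \<omega> + \<bar>R \<omega>\<bar>)
    = 2 * (expectation (\<lambda>\<omega>. (R \<omega>)\<^sup>2) - (expectation (\<lambda>\<omega>. \<bar>R \<omega>\<bar>))\<^sup>2)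
      + 2 * expectation (\<lambda>\<omega>. (K \<omega>)\<^sup>2) + 2 * (expectation K)\<^sup>2"
proof -
  have KI: "integrable M K"
    by (rule integrable_const_bound[where B=d]) (use K_le in auto)
  have K2I: "integrable M (\<lambda>\<omega>. (K \<omega>)\<^sup>2)"
    by (rule integrable_const_bound[where B="d\<^sup>2"])
      (use K_le \<open>0 \<le> d\<close> in \<open>auto simp: abs_le_square_iff[symmetric]\<close>)
  have RI: "integrable M R" by (rule square_integrable_imp_integrable[OF _ R2]) simp
  have sq_integrable: "integrable M (\<lambda>\<omega>. (d + c * K \<omega> + \<bar>R \<omega>\<bar>)\<^sup>2)" if "\<bar>c\<bar> \<le> 1" for c
  proof (rule Bochner_Integration.integrable_bound)
    show "integrable M (\<lambda>\<omega>. (2 * d + \<bar>R \<omega>\<bar>)\<^sup>2)"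
      using RI R2 by (simp add: power2_sum)
    have "\<bar>c * K \<omega>\<bar> \<le> d" for \<omega>
      using mult_mono[OF that K_le[of \<omega>]] by (simp add: abs_mult)
    then have "\<bar>d + c * K \<omega> + \<bar>R \<omega>\<bar>\<bar> \<le> \<bar>2 * d + \<bar>R \<omega>\<bar>\<bar>" for \<omega>
      using \<open>0 \<le> d\<close> by (smt (verit))
    then show "AE \<omega> in M. norm ((d + c * K \<omega> + \<bar>R \<omega>\<bar>)\<^sup>2) \<le> norm ((2 * d + \<bar>R \<omega>\<bar>)\<^sup>2)"
      by (simp add: abs_le_square_iff)
  qed simp
  have "(\<lambda>\<omega>. (d + K \<omega> + \<bar>R \<omega>\<bar>)\<^sup>2 + (d - K \<omega> + \<bar>R \<omega>\<bar>)\<^sup>2)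
      = (\<lambda>\<omega>. 2 * d\<^sup>2 + 4 * d * \<bar>R \<omega>\<bar> + 2 * (R \<omega>)\<^sup>2 + 2 * (K \<omega>)\<^sup>2)"
    by (simp add: fun_eq_iff power2_eq_square algebra_simps)
  then have squares: "expectation (\<lambda>\<omega>. (d + K \<omega> + \<bar>R \<omega>\<bar>)\<^sup>2) + expectation (\<lambda>\<omega>. (d - K \<omega> + \<bar>R \<omega>\<bar>)\<^sup>2)
      = 2 * d\<^sup>2 + 4 * d * expectation (\<lambda>\<omega>. \<bar>R \<omega>\<bar>) + 2 * expectation (\<lambda>\<omega>. (R \<omega>)\<^sup>2)
        + 2 * expectation (\<lambda>\<omega>. (K \<omega>)\<^sup>2)"
    using sq_integrable[of 1] sq_integrable[of "-1"] K2I RI R2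
    by (simp add: Bochner_Integration.integral_add[symmetric] prob_space)
  have means: "expectation (\<lambda>\<omega>. d + K \<omega> + \<bar>R \<omega>\<bar>) = d + expectation K + expectation (\<lambda>\<omega>. \<bar>R \<omega>\<bar>)"
    "expectation (\<lambda>\<omega>. d - K \<omega> + \<bar>R \<omega>\<bar>) = d - expectation K + expectation (\<lambda>\<omega>. \<bar>R \<omega>\<bar>)"
    using KI RI by (simp_all add: prob_space)
  show ?thesis
    unfolding squares means by (simp add: power2_eq_square algebra_simps)
qed

lemma clamped_split_bound:
  fixes K R :: "'a \<Rightarrow> real"
  assumes "0 \<le> d" and [measurable]: "K \<in> borel_measurable M" "R \<in> borel_measurable M"
    and K_le: "\<And>\<omega>. \<bar>K \<omega>\<bar> \<le> d" and level: "\<And>\<omega>. R \<omega> \<noteq> 0 \<Longrightarrow> \<bar>K \<omega>\<bar> = d"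
    and R2: "integrable M (\<lambda>\<omega>. (R \<omega>)\<^sup>2)"
  shows "(\<bar>expectation K + expectation R + d\<bar> - \<bar>expectation K + expectation R - d\<bar>)\<^sup>2
    \<le> 8 * (expectation (\<lambda>\<omega>. (R \<omega>)\<^sup>2) - (expectation (\<lambda>\<omega>. \<bar>R \<omega>\<bar>))\<^sup>2
      + expectation (\<lambda>\<omega>. (K \<omega>)\<^sup>2) + (expectation K)\<^sup>2)"
proof -
  have K2I: "integrable M (\<lambda>\<omega>. (K \<omega>)\<^sup>2)"
    by (rule integrable_const_bound[where B="d\<^sup>2"])
      (use K_le \<open>0 \<le> d\<close> in \<open>auto simp: abs_le_square_iff[symmetric]\<close>)
  have RI: "integrable M R" by (rule square_integrable_imp_integrable[OF _ R2]) simp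
  define k where "k = expectation K"
  define r where "r = expectation R"
  define \<alpha> where "\<alpha> = expectation (\<lambda>\<omega>. \<bar>R \<omega>\<bar>)"
  define \<rho> where "\<rho> = expectation (\<lambda>\<omega>. (R \<omega>)\<^sup>2)"
  define \<kappa> where "\<kappa> = expectation (\<lambda>\<omega>. (K \<omega>)\<^sup>2)"
  have "\<bar>r\<bar> \<le> \<alpha>" unfolding r_def \<alpha>_def by (rule integral_abs_bound)
  then have r_le: "r\<^sup>2 \<le> \<alpha>\<^sup>2" by (simp add: abs_le_square_iff[symmetric])
  have \<alpha>_le: "\<alpha>\<^sup>2 \<le> \<rho>"
    using variance_positive[of "\<lambda>\<omega>. \<bar>R \<omega>\<bar>"] variance_eq[of "\<lambda>\<omega>. \<bar>R \<omega>\<bar>"] RI R2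
    by (simp add: \<alpha>_def \<rho>_def)
  have "0 \<le> \<kappa>" unfolding \<kappa>_def by simp
  have "d\<^sup>2 \<le> 2 * \<kappa> \<or> 2 * \<alpha>\<^sup>2 \<le> \<rho>"
    unfolding \<alpha>_def \<rho>_def \<kappa>_def by (rule moment_dichotomy) (use K2I R2 level in auto)
  then have "(\<bar>k + r + d\<bar> - \<bar>k + r - d\<bar>)\<^sup>2 \<le> 8 * (\<rho> - \<alpha>\<^sup>2 + \<kappa> + k\<^sup>2)"
  proof
    assume "d\<^sup>2 \<le> 2 * \<kappa>"
    then show ?thesis
      using abs_add_minus_abs_diff_sq_le(1)[OF \<open>0 \<le> d\<close>, of "k + r"] \<alpha>_le
      by (smt (verit) zero_le_power2)
  next
    assume "2 * \<alpha>\<^sup>2 \<le> \<rho>"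
    moreover have "(k + r)\<^sup>2 \<le> 2 * k\<^sup>2 + 2 * r\<^sup>2"
      using zero_le_power2[of "k - r"] by (simp add: power2_eq_square algebra_simps)
    ultimately show ?thesis
      using abs_add_minus_abs_diff_sq_le(2)[OF \<open>0 \<le> d\<close>, of "k + r"] r_le \<open>0 \<le> \<kappa>\<close> by argo
  qed
  then show ?thesis unfolding k_def r_def \<alpha>_def \<rho>_def \<kappa>_def .
qed

lemma abs_shift_diff_sq_le:
  fixes Y :: "'a \<Rightarrow> real"
  assumes [measurable]: "Y \<in> borel_measurable M" and Y2: "integrable M (\<lambda>\<omega>. (Y \<omega>)\<^sup>2)"
  shows "(\<bar>t + expectation Y\<bar> - \<bar>w + expectation Y\<bar>)\<^sup>2
    \<le> 4 * (expectation (\<lambda>\<omega>. (t + Y \<omega>)\<^sup>2) + expectation (\<lambda>\<omega>. (w + Y \<omega>)\<^sup>2)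
      - 2 * expectation (\<lambda>\<omega>. \<bar>t + Y \<omega>\<bar>) * expectation (\<lambda>\<omega>. \<bar>w + Y \<omega>\<bar>))"
proof (induct w t rule: linorder_wlog)
  case (sym w t)
  then show ?case by (simp add: power2_commute algebra_simps)
next
  case (le w t)
  have YI: "integrable M Y" by (rule square_integrable_imp_integrable[OF _ Y2]) simp
  define d where "d = (t - w) / 2"
  define c where "c = (t + w) / 2"
  define K where "K \<omega> = max (-d) (min d (c + Y \<omega>))" for \<omega>
  define R where "R \<omega> = c + Y \<omega> - K \<omega>" for \<omega>
  have "0 \<le> d" using le by (simp add: d_def)
  have [measurable]: "K \<in> borel_measurable M" "R \<in> borel_measurable M"
    unfolding K_def R_def by measurable
  have K_le: "\<bar>K \<omega>\<bar> \<le> d" for \<omega>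
    using \<open>0 \<le> d\<close> by (auto simp: K_def)
  have level: "\<bar>K \<omega>\<bar> = d" if "R \<omega> \<noteq> 0" for \<omega>
    using that \<open>0 \<le> d\<close> by (auto simp: K_def R_def max_def min_def split: if_splits)
  have R_le: "\<bar>R \<omega>\<bar> \<le> \<bar>c + Y \<omega>\<bar>" for \<omega>
    using \<open>0 \<le> d\<close> by (auto simp: K_def R_def max_def min_def)
  have R2: "integrable M (\<lambda>\<omega>. (R \<omega>)\<^sup>2)"
  proof (rule Bochner_Integration.integrable_bound)
    show "integrable M (\<lambda>\<omega>. (c + Y \<omega>)\<^sup>2)"
      using YI Y2 by (simp add: power2_sum)
    show "AE \<omega> in M. norm ((R \<omega>)\<^sup>2) \<le> norm ((c + Y \<omega>)\<^sup>2)"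
      using R_le by (simp add: abs_le_square_iff)
  qed simp
  have plus: "\<bar>t + Y \<omega>\<bar> = d + K \<omega> + \<bar>R \<omega>\<bar>" and minus: "\<bar>w + Y \<omega>\<bar> = d - K \<omega> + \<bar>R \<omega>\<bar>" for \<omega>
  proof -
    have "t + Y \<omega> = (c + Y \<omega>) + d" and "w + Y \<omega> = (c + Y \<omega>) - d"
      by (simp_all add: c_def d_def field_simps)
    then show "\<bar>t + Y \<omega>\<bar> = d + K \<omega> + \<bar>R \<omega>\<bar>" and "\<bar>w + Y \<omega>\<bar> = d - K \<omega> + \<bar>R \<omega>\<bar>"
      unfolding K_def R_def by (metis abs_add_eq_clamp(1) \<open>0 \<le> d\<close>, metis abs_add_eq_clamp(2) \<open>0 \<le> d\<close>)
  qed
  have "expectation K + expectation R = c + expectation Y"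
  proof -
    have "(\<lambda>\<omega>. c + Y \<omega>) = (\<lambda>\<omega>. K \<omega> + R \<omega>)" by (simp add: fun_eq_iff R_def)
    moreover have "integrable M K" "integrable M R"
      using integrable_const_bound[of K d] K_le square_integrable_imp_integrable[OF _ R2] by auto
    ultimately have "expectation (\<lambda>\<omega>. c + Y \<omega>) = expectation K + expectation R" by simp
    then show ?thesis using YI by (simp add: prob_space)
  qed
  then have "t + expectation Y = expectation K + expectation R + d"
    and "w + expectation Y = expectation K + expectation R - d"
    by (simp_all add: c_def d_def field_simps)
  moreover have "(\<lambda>\<omega>. \<bar>t + Y \<omega>\<bar>) = (\<lambda>\<omega>. d + K \<omega> + \<bar>R \<omega>\<bar>)"
    and "(\<lambda>\<omega>. \<bar>w + Y \<omega>\<bar>) = (\<lambda>\<omega>. d - K \<omega> + \<bar>R \<omega>\<bar>)"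
    and "(\<lambda>\<omega>. (t + Y \<omega>)\<^sup>2) = (\<lambda>\<omega>. (d + K \<omega> + \<bar>R \<omega>\<bar>)\<^sup>2)"
    and "(\<lambda>\<omega>. (w + Y \<omega>)\<^sup>2) = (\<lambda>\<omega>. (d - K \<omega> + \<bar>R \<omega>\<bar>)\<^sup>2)"
    by (simp_all add: fun_eq_iff flip: plus minus)
  ultimately show ?case
    using clamped_split_bound[of d K R, OF \<open>0 \<le> d\<close> _ _ K_le level R2]
      clamped_split_spread_eq[of d K R, OF \<open>0 \<le> d\<close> _ _ K_le R2] by simp
qed

lemma variance_le_of_pairwise_bound:
  fixes P Q F :: "'a \<Rightarrow> real"
  assumes [measurable]: "P \<in> borel_measurable M"
    and P2: "integrable M (\<lambda>\<omega>. (P \<omega>)\<^sup>2)" and QI: "integrable M Q" and FI: "integrable M F"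
    and pairwise: "\<And>\<omega> \<omega>'. (P \<omega> - P \<omega>')\<^sup>2 \<le> Q \<omega> + Q \<omega>' - 2 * F \<omega> * F \<omega>'"
  shows "variance P \<le> expectation Q - (expectation F)\<^sup>2"
proof -
  have PI: "integrable M P" by (rule square_integrable_imp_integrable[OF _ P2]) simp
  define p1 where "p1 = expectation P"
  define p2 where "p2 = expectation (\<lambda>\<omega>. (P \<omega>)\<^sup>2)"
  have inner: "p2 + (P \<omega>')\<^sup>2 - 2 * p1 * P \<omega>' \<le> expectation Q + Q \<omega>' - 2 * expectation F * F \<omega>'" for \<omega>'
  proof -
    have "expectation (\<lambda>\<omega>. (P \<omega> - P \<omega>')\<^sup>2) \<le> expectation (\<lambda>\<omega>. Q \<omega> + Q \<omega>' - 2 * F \<omega> * F \<omega>')"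
      by (rule integral_mono) (use PI P2 QI FI pairwise in \<open>auto simp: power2_diff\<close>)
    then show ?thesis
      using PI P2 QI FI by (simp add: power2_diff prob_space p1_def p2_def)
  qed
  have "expectation (\<lambda>\<omega>'. p2 + (P \<omega>')\<^sup>2 - 2 * p1 * P \<omega>')
      \<le> expectation (\<lambda>\<omega>'. expectation Q + Q \<omega>' - 2 * expectation F * F \<omega>')"
    by (rule integral_mono) (use PI P2 QI FI inner in auto)
  then have "2 * p2 - 2 * p1\<^sup>2 \<le> 2 * expectation Q - 2 * (expectation F)\<^sup>2"
    using PI P2 QI FI by (simp add: prob_space p1_def p2_def power2_eq_square)
  then show ?thesis
    using variance_eq[OF PI P2] by (simp add: p1_def p2_def)
qed

lemma variance_abs_add_expectation_le:
  fixes X Y :: "'a \<Rightarrow> real"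
  assumes indep: "indep_var borel X borel Y"
    and [measurable]: "X \<in> borel_measurable M" "Y \<in> borel_measurable M"
    and X2: "integrable M (\<lambda>\<omega>. (X \<omega>)\<^sup>2)" and Y2: "integrable M (\<lambda>\<omega>. (Y \<omega>)\<^sup>2)"
  shows "variance (\<lambda>\<omega>. \<bar>X \<omega> + expectation Y\<bar>) \<le> 4 * variance (\<lambda>\<omega>. \<bar>X \<omega> + Y \<omega>\<bar>)"
proof -
  have XI: "integrable M X" by (rule square_integrable_imp_integrable[OF _ X2]) simp
  have YI: "integrable M Y" by (rule square_integrable_imp_integrable[OF _ Y2]) simp
  have XY2: "integrable M (\<lambda>\<omega>. (X \<omega> + Y \<omega>)\<^sup>2)"
    using X2 Y2 indep_var_integrable[OF indep XI YI] by (simp add: power2_sum mult.assoc)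
  define F where "F = (\<lambda>\<omega>. expectation (\<lambda>\<omega>'. \<bar>X \<omega> + Y \<omega>'\<bar>))"
  define Q where "Q = (\<lambda>\<omega>. expectation (\<lambda>\<omega>'. (X \<omega> + Y \<omega>')\<^sup>2))"
  have FI: "integrable M F" and F_mean: "expectation (\<lambda>\<omega>. \<bar>X \<omega> + Y \<omega>\<bar>) = expectation F"
    using indep_var_expectation_iterated[OF indep, of "\<lambda>x y. \<bar>x + y\<bar>"] XI YI
    by (simp_all add: F_def)
  have QI: "integrable M Q" and Q_mean: "expectation (\<lambda>\<omega>. (X \<omega> + Y \<omega>)\<^sup>2) = expectation Q"
    using indep_var_expectation_iterated[OF indep, of "\<lambda>x y. (x + y)\<^sup>2"] XY2
    by (simp_all add: Q_def)
  have "variance (\<lambda>\<omega>. \<bar>X \<omega> + expectation Y\<bar>)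
      \<le> expectation (\<lambda>\<omega>. 4 * Q \<omega>) - (expectation (\<lambda>\<omega>. 2 * F \<omega>))\<^sup>2"
  proof (rule variance_le_of_pairwise_bound)
    show "integrable M (\<lambda>\<omega>. \<bar>X \<omega> + expectation Y\<bar>\<^sup>2)"
      using XI X2 by (simp add: power2_sum)
    show "(\<bar>X \<omega> + expectation Y\<bar> - \<bar>X \<omega>' + expectation Y\<bar>)\<^sup>2 \<le> 4 * Q \<omega> + 4 * Q \<omega>' - 2 * (2 * F \<omega>) * (2 * F \<omega>')"
      for \<omega> \<omega>'
      using abs_shift_diff_sq_le[OF _ Y2, of "X \<omega>" "X \<omega>'"] by (simp add: F_def Q_def)
  qed (use FI QI in simp_all)
  also have "\<dots> = 4 * (expectation (\<lambda>\<omega>. (X \<omega> + Y \<omega>)\<^sup>2) - (expectation (\<lambda>\<omega>. \<bar>X \<omega> + Y \<omega>\<bar>))\<^sup>2)"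
    by (simp add: F_mean Q_mean power_mult_distrib)
  also have "\<dots> = 4 * variance (\<lambda>\<omega>. \<bar>X \<omega> + Y \<omega>\<bar>)"
    using variance_eq[of "\<lambda>\<omega>. \<bar>X \<omega> + Y \<omega>\<bar>"] XI YI XY2 by simp
  finally show ?thesis .
qed

end

theorem lemma5:
  shows "\<exists>K0::real. 0 < K0 \<and> K0 \<le> 4 \<and>
    (\<forall>(M::'a measure) (X::'a \<Rightarrow> real) (Y::'a \<Rightarrow> real).
       prob_space M \<longrightarrow>
       X \<in> borel_measurable M \<longrightarrow> Y \<in> borel_measurable M \<longrightarrow>
       prob_space.indep_var M borel X borel Y \<longrightarrow>
       integrable M (\<lambda>\<omega>. (X \<omega>)\<^sup>2) \<longrightarrow> integrable M (\<lambda>\<omega>. (Y \<omega>)\<^sup>2) \<longrightarrow>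
       prob_space.variance M (\<lambda>\<omega>. \<bar>X \<omega> + Y \<omega>\<bar>) \<ge>
         max (prob_space.variance M (\<lambda>\<omega>. \<bar>X \<omega> + prob_space.expectation M Y\<bar>))
             (prob_space.variance M (\<lambda>\<omega>. \<bar>Y \<omega> + prob_space.expectation M X\<bar>)) / K0)"
proof (intro exI[of _ 4] conjI allI impI)
  fix M :: "'a measure" and X Y :: "'a \<Rightarrow> real"
  assume "prob_space M"
  then interpret prob_space M .
  assume X: "X \<in> borel_measurable M" and Y: "Y \<in> borel_measurable M"
    and indep: "indep_var borel X borel Y"
    and X2: "integrable M (\<lambda>\<omega>. (X \<omega>)\<^sup>2)" and Y2: "integrable M (\<lambda>\<omega>. (Y \<omega>)\<^sup>2)"
  have "variance (\<lambda>\<omega>. \<bar>X \<omega> + expectation Y\<bar>) \<le> 4 * variance (\<lambda>\<omega>. \<bar>X \<omega> + Y \<omega>\<bar>)"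
    by (rule variance_abs_add_expectation_le[OF indep X Y X2 Y2])
  moreover have "variance (\<lambda>\<omega>. \<bar>Y \<omega> + expectation X\<bar>) \<le> 4 * variance (\<lambda>\<omega>. \<bar>X \<omega> + Y \<omega>\<bar>)"
    using variance_abs_add_expectation_le[OF indep_var_sym[OF indep] Y X Y2 X2]
    by (simp add: add.commute)
  ultimately show "max (variance (\<lambda>\<omega>. \<bar>X \<omega> + expectation Y\<bar>)) (variance (\<lambda>\<omega>. \<bar>Y \<omega> + expectation X\<bar>)) / 4
      \<le> variance (\<lambda>\<omega>. \<bar>X \<omega> + Y \<omega>\<bar>)"
    by simp
qed simp_all

end
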